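(* Let $p$ be an odd prime and $0<\alpha_0<\alpha_1<\alpha_*=(p-1)/p$. There is a function $\delta(r)\to0$ as $r\to\infty$, depending only on $p,\alpha_0,\alpha_1$, such that for every $T\le r^3$, \[ \sup_{s\ge\alpha_1r}\mathbb P_s\left(\inf_{0\le t\le T}S_t<\alpha_0r\right)\le T\exp\{-(J_p(\alpha_0,\alpha_1)+\delta(r))r\}. \]
   Context: $J_p(a,b)=\int_a^b\log\left(\frac{(p-1)(1-u)}{u}\right)du$ for $0<a<b<\alpha_*$. Let $(Y_t)$ be the one-column $p$-ary transvection walk on $\mathbb F_p^r\setminus\{0\}$: at each step choose an ordered pair of distinct $i,j\in[r]$ and $a\in\mathbb F_p$ uniformly and replace $Y_i$ by $Y_i+aY_j$. $S_t=|\{i:Y_t(i)\ne0\}|$ is a birth–death chain on $\{1,\dots,r\}$ with birth probability $B_s=\frac{p-1}{p}\frac{s(r-s)}{r(r-1)}$ and death probability $D_s=\frac1p\frac{s(s-1)}{r(r-1)}$; $\mathbb P_s$ is its law from $S_0=s$. *)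

theory Defs
  imports "HOL-Probability.Probability"
begin

definition J :: "nat \<Rightarrow> real \<Rightarrow> real \<Rightarrow> real" where
  "J p a b = integral {a..b} (\<lambda>u. ln ((real p - 1) * (1 - u) / u))"

definition birth :: "nat \<Rightarrow> nat \<Rightarrow> nat \<Rightarrow> real" where
  "birth p r s = (real p - 1) / real p * (real s * (real r - real s)) / (real r * (real r - 1))"

definition death :: "nat \<Rightarrow> nat \<Rightarrow> nat \<Rightarrow> real" where
  "death p r s = 1 / real p * (real s * (real s - 1)) / (real r * (real r - 1))"

definition bd_step :: "nat \<Rightarrow> nat \<Rightarrow> nat \<Rightarrow> nat pmf" where
  "bd_step p r s =
     bind_pmf (bernoulli_pmf (birth p r s + death p r s))
       (\<lambda>moves. if moves then
           map_pmf (\<lambda>up. if up then s + 1 else s - 1)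
             (bernoulli_pmf (birth p r s / (birth p r s + death p r s)))
         else return_pmf s)"

fun bd_traj :: "nat \<Rightarrow> nat \<Rightarrow> nat \<Rightarrow> nat \<Rightarrow> nat list pmf" where
  "bd_traj p r 0 s = return_pmf [s]"
| "bd_traj p r (Suc T) s =
     bind_pmf (bd_step p r s) (\<lambda>s'. map_pmf (\<lambda>xs. s # xs) (bd_traj p r T s'))"

end

theory Submission
  imports Defs
begin

(* Let c = ceil(alpha0 r), m = ceil(alpha1 r) and w y = prod_{z=c..y} D_z / B_z, so w (c-1) = 1.
   The truncated scale function H x = sum_{y=x..m-1} w y is at least 1 below c, vanishes from m on,
   is harmonic for the chain on [c, m), and has one-step drift D_m w (m-1) <= W = prod_{z=c..m-1} D_z / B_z
   at m. Hence T W + H dominates the probability of entering [0, c) within T steps, which from s >= m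
   is therefore at most T W. Finally B_z / D_z = (p-1)(r-z)/(z-1), whose logarithm exceeds the
   decreasing integrand of J at z/r; so -ln W >= r (F(m/r) - F(c/r)) for a primitive F of the
   integrand, and F(m/r) - F(c/r) tends to J_p(alpha0, alpha1). *)

lemma prob_bind_pmf:
  "measure_pmf.prob (bind_pmf M N) X = measure_pmf.expectation M (\<lambda>x. measure_pmf.prob (N x) X)"
  unfolding measure_pmf_bind
  by (rule measure_pmf.measure_bind[where N="count_space UNIV"])
    (auto simp: space_subprob_algebra measure_pmf.subprob_space_axioms)

lemma real_mult_pred_nonneg: "0 \<le> real n * (real n - 1)"
  by (cases n) auto

lemma death_nonneg: "0 \<le> death p r s"
  using real_mult_pred_nonneg[of s] real_mult_pred_nonneg[of r]
  unfolding death_def by (auto intro!: divide_nonneg_nonneg)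

lemma birth_nonneg: "s \<le> r \<Longrightarrow> 0 \<le> birth p r s"
  using real_mult_pred_nonneg[of r] unfolding birth_def
  by (cases p) (auto intro!: divide_nonneg_nonneg mult_nonneg_nonneg)

lemma birth_pos: "2 \<le> p \<Longrightarrow> 1 \<le> s \<Longrightarrow> s < r \<Longrightarrow> 0 < birth p r s"
  unfolding birth_def by (intro divide_pos_pos mult_pos_pos) auto

lemma death_pos: "0 < p \<Longrightarrow> 2 \<le> s \<Longrightarrow> s \<le> r \<Longrightarrow> 0 < death p r s"
  unfolding death_def by (intro divide_pos_pos mult_pos_pos) auto

lemma birth_top [simp]: "birth p r r = 0"
  unfolding birth_def by simp

lemma birth_plus_death_le_1:
  assumes "s \<le> r"
  shows "birth p r s + death p r s \<le> 1"
proof (cases "p = 0 \<or> r \<le> 1")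
  case True
  then have "real p = 0 \<or> real r * (real r - 1) = 0"
    by (auto simp: le_Suc_eq)
  then show ?thesis
    unfolding birth_def death_def by auto
next
  case False
  then have p: "1 \<le> real p" and r: "0 < real r * (real r - 1)"
    by auto
  have s: "real s \<le> real r"
    using assms by simp
  have "real s * (real r - real s) \<le> real r * (real r - 1)"
  proof (cases "s = 0")
    case False
    have "real r * (real r - 1) - real s * (real r - real s)
        = (real r - real s)\<^sup>2 + real r * (real s - 1)"
      by (simp add: algebra_simps power2_eq_square)
    moreover have "0 \<le> real r * (real s - 1)"
      using False by simp
    ultimately show ?thesis
      by (smt (verit) zero_le_power2)
  qed (use r in simp)
  moreover have "real s * (real s - 1) \<le> real r * (real r - 1)"
    using s real_mult_pred_nonneg[of r] by (cases s) (auto intro: mult_mono)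
  ultimately have "(real p - 1) * (real s * (real r - real s)) + real s * (real s - 1)
      \<le> (real p - 1) * (real r * (real r - 1)) + real r * (real r - 1)"
    using p by (intro add_mono mult_left_mono) auto
  moreover have "birth p r s + death p r s = ((real p - 1) * (real s * (real r - real s))
      + real s * (real s - 1)) / (real p * (real r * (real r - 1)))"
    unfolding birth_def death_def by (simp add: add_divide_distrib)
  ultimately show ?thesis
    using p r by (simp add: algebra_simps)
qed

lemma expectation_bd_step:
  fixes f :: "nat \<Rightarrow> real"
  assumes "x \<le> r"
  shows "measure_pmf.expectation (bd_step p r x) f =
    birth p r x * f (x + 1) + death p r x * f (x - 1) + (1 - birth p r x - death p r x) * f x"
proof -
  define B where "B = birth p r x"
  define D where "D = death p r x"
  have BD: "0 \<le> B" "0 \<le> D" "B + D \<le> 1"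
    using assms birth_nonneg death_nonneg birth_plus_death_le_1 by (auto simp: B_def D_def)
  have e: "measure_pmf.expectation (bd_step p r x) f =
     measure_pmf.expectation (bernoulli_pmf (B + D)) (\<lambda>moves. measure_pmf.expectation (if moves then
           map_pmf (\<lambda>up. if up then x + 1 else x - 1) (bernoulli_pmf (B / (B + D)))
         else return_pmf x) f)"
    unfolding bd_step_def B_def[symmetric] D_def[symmetric]
    by (subst pmf_expectation_bind[where A=UNIV]) (auto simp: UNIV_bool integral_measure_pmf[of UNIV])
  show ?thesis
  proof (cases "B + D = 0")
    case True
    then have "B = 0" "D = 0"
      using BD by auto
    then show ?thesis
      unfolding e by (simp add: B_def[symmetric] D_def[symmetric])
  next
    case False
    then have "0 < B + D" "B / (B + D) \<le> 1"
      using BD by auto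
    then have E: "measure_pmf.expectation (bd_step p r x) f = (B + D) * (B / (B + D)) * f (x + 1)
        + (B + D) * (1 - B / (B + D)) * f (x - 1) + (1 - (B + D)) * f x"
      unfolding e using BD by (simp add: algebra_simps)
    moreover have "(B + D) * (B / (B + D)) = B" "(B + D) * (1 - B / (B + D)) = D"
      using False by (auto simp: field_simps)
    ultimately show ?thesis
      unfolding E by (simp add: B_def D_def algebra_simps)
  qed
qed

lemma expectation_bd_step_mono:
  fixes f g :: "nat \<Rightarrow> real"
  assumes "x \<in> {1..r}" and le: "\<And>y. y \<in> {1..r} \<Longrightarrow> f y \<le> g y"
  shows "measure_pmf.expectation (bd_step p r x) f \<le> measure_pmf.expectation (bd_step p r x) g"
proof -
  have "birth p r x * f (x + 1) \<le> birth p r x * g (x + 1)"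
  proof (cases "x = r")
    case False
    then show ?thesis
      using assms birth_nonneg[of x r p] by (intro mult_left_mono le) auto
  qed simp
  moreover have "death p r x * f (x - 1) \<le> death p r x * g (x - 1)"
  proof (cases "x = 1")
    case False
    then show ?thesis
      using assms death_nonneg[of p r x] by (intro mult_left_mono le) auto
  qed (simp add: death_def)
  moreover have "(1 - birth p r x - death p r x) * f x \<le> (1 - birth p r x - death p r x) * g x"
    using assms birth_plus_death_le_1[of x r p] by (intro mult_left_mono le) auto
  ultimately show ?thesis
    using assms by (simp add: expectation_bd_step)
qed

definition hit_prob :: "nat \<Rightarrow> nat \<Rightarrow> nat set \<Rightarrow> nat \<Rightarrow> nat \<Rightarrow> real" where
  "hit_prob p r A T x = measure_pmf.prob (bd_traj p r T x) {xs. \<exists>y \<in> set xs. y \<in> A}"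

lemma hit_prob_0: "hit_prob p r A 0 x = (if x \<in> A then 1 else 0)"
  unfolding hit_prob_def by simp

lemma hit_prob_Suc:
  "hit_prob p r A (Suc T) x =
    (if x \<in> A then 1 else measure_pmf.expectation (bd_step p r x) (hit_prob p r A T))"
proof -
  have "(#) x -` {xs. \<exists>y \<in> set xs. y \<in> A} = (if x \<in> A then UNIV else {xs. \<exists>y \<in> set xs. y \<in> A})"
    by auto
  then show ?thesis
    unfolding hit_prob_def by (simp add: prob_bind_pmf)
qed

lemma hit_prob_le_steps: "x \<notin> A \<Longrightarrow> hit_prob p r A T x \<le> real T"
proof (cases T)
  case (Suc n)
  have "hit_prob p r A T x \<le> 1"
    unfolding hit_prob_def by simp
  then show ?thesis
    using Suc by simp
qed (simp add: hit_prob_0)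

lemma hit_prob_le_drift:
  fixes v :: "nat \<Rightarrow> real"
  assumes "0 \<le> \<epsilon>"
    and nonneg: "\<And>y. y \<in> {1..r} \<Longrightarrow> 0 \<le> v y"
    and ge_1: "\<And>y. y \<in> A \<inter> {1..r} \<Longrightarrow> 1 \<le> v y"
    and drift: "\<And>y. y \<in> {1..r} - A \<Longrightarrow> measure_pmf.expectation (bd_step p r y) v \<le> v y + \<epsilon>"
    and "x \<in> {1..r}"
  shows "hit_prob p r A T x \<le> real T * \<epsilon> + v x"
  using \<open>x \<in> {1..r}\<close>
proof (induction T arbitrary: x)
  case 0
  then show ?case
    using nonneg ge_1 by (simp add: hit_prob_0)
next
  case (Suc T)
  show ?case
  proof (cases "x \<in> A")
    case True
    then show ?thesis
      using Suc.prems ge_1 \<open>0 \<le> \<epsilon>\<close> by (simp add: hit_prob_Suc add_increasing)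
  next
    case False
    have "hit_prob p r A (Suc T) x = measure_pmf.expectation (bd_step p r x) (hit_prob p r A T)"
      using False by (simp add: hit_prob_Suc)
    also have "\<dots> \<le> measure_pmf.expectation (bd_step p r x) (\<lambda>y. real T * \<epsilon> + v y)"
      using Suc by (intro expectation_bd_step_mono)
    also have "\<dots> = real T * \<epsilon> + measure_pmf.expectation (bd_step p r x) v"
      using Suc.prems by (simp add: expectation_bd_step algebra_simps)
    also have "\<dots> \<le> real (Suc T) * \<epsilon> + v x"
      using drift[of x] Suc.prems False by (simp add: algebra_simps)
    finally show ?thesis .
  qed
qed

definition scale_weight :: "nat \<Rightarrow> nat \<Rightarrow> nat \<Rightarrow> nat \<Rightarrow> real" where
  "scale_weight p r c y = (\<Prod>z\<in>{c..y}. death p r z / birth p r z)"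

definition scale :: "nat \<Rightarrow> nat \<Rightarrow> nat \<Rightarrow> nat \<Rightarrow> nat \<Rightarrow> real" where
  "scale p r c m x = (\<Sum>y\<in>{x..<m}. scale_weight p r c y)"

lemma scale_weight_nonneg: "y \<le> r \<Longrightarrow> 0 \<le> scale_weight p r c y"
  unfolding scale_weight_def
  by (intro prod_nonneg ballI divide_nonneg_nonneg death_nonneg birth_nonneg) auto

lemma scale_weight_pred_start: "1 \<le> c \<Longrightarrow> scale_weight p r c (c - 1) = 1"
  unfolding scale_weight_def by simp

lemma birth_mult_scale_weight:
  assumes "2 \<le> p" "1 \<le> c" "c \<le> x" "x < r"
  shows "birth p r x * scale_weight p r c x = death p r x * scale_weight p r c (x - 1)"
proof -
  obtain k where k: "x = Suc k"
    using assms by (cases x) auto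
  have "scale_weight p r c x = death p r x / birth p r x * scale_weight p r c (x - 1)"
    unfolding scale_weight_def k using assms k by (simp add: prod.cl_ivl_Suc)
  then show ?thesis
    using birth_pos[of p x r] assms by simp
qed

lemma scale_nonneg: "m \<le> r \<Longrightarrow> 0 \<le> scale p r c m x"
  unfolding scale_def by (intro sum_nonneg scale_weight_nonneg) auto

lemma scale_ge_1:
  assumes "1 \<le> c" "c \<le> m" "m \<le> r" "x < c"
  shows "1 \<le> scale p r c m x"
proof -
  have "scale_weight p r c (c - 1) \<le> scale p r c m x"
    unfolding scale_def using assms
    by (intro member_le_sum scale_weight_nonneg) auto
  with scale_weight_pred_start[OF \<open>1 \<le> c\<close>, of p r] show ?thesis
    by linarith
qed

lemma scale_eq_0: "m \<le> x \<Longrightarrow> scale p r c m x = 0"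
  unfolding scale_def by simp

lemma scale_split: "x < m \<Longrightarrow> scale p r c m x = scale_weight p r c x + scale p r c m (x + 1)"
  unfolding scale_def by (simp add: sum.atLeast_Suc_lessThan)

lemma expectation_scale_le:
  assumes "2 \<le> p" "1 \<le> c" "c \<le> m" "m < r" "x \<in> {c..r}"
  shows "measure_pmf.expectation (bd_step p r x) (scale p r c m)
    \<le> scale p r c m x + death p r m * scale_weight p r c (m - 1)"
proof -
  let ?H = "scale p r c m" and ?w = "scale_weight p r c"
  have \<epsilon>_nonneg: "0 \<le> death p r m * ?w (m - 1)"
    using assms by (intro mult_nonneg_nonneg death_nonneg scale_weight_nonneg) auto
  have "birth p r x * ?H (x + 1) + death p r x * ?H (x - 1) + (1 - birth p r x - death p r x) * ?H x
      \<le> ?H x + death p r m * ?w (m - 1)"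
  proof (cases rule: linorder_cases[of x m])
    case less
    have "?H (x - 1) = ?w (x - 1) + ?H x" "?H x = ?w x + ?H (x + 1)"
      using scale_split[of "x - 1" m] scale_split[of x m] less assms by auto
    with birth_mult_scale_weight[of p c x r] assms less
    show ?thesis
      using \<epsilon>_nonneg by (simp add: algebra_simps)
  next
    case equal
    then have "?H (x - 1) = ?w (m - 1)"
      using scale_split[of "x - 1" m] assms by (simp add: scale_eq_0)
    then show ?thesis
      using equal by (simp add: scale_eq_0)
  next
    case greater
    then show ?thesis
      using \<epsilon>_nonneg by (simp add: scale_eq_0)
  qed
  then show ?thesis
    using assms by (simp add: expectation_bd_step)
qed

lemma hit_prob_le_prod:
  assumes "2 \<le> p" "1 \<le> c" "c \<le> m" "m < r" "x \<in> {m..r}"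
  shows "hit_prob p r {..<c} T x \<le> real T * (\<Prod>z\<in>{c..<m}. death p r z / birth p r z)"
proof -
  have "hit_prob p r {..<c} T x \<le> real T * (death p r m * scale_weight p r c (m - 1)) + scale p r c m x"
  proof (rule hit_prob_le_drift)
    show "0 \<le> death p r m * scale_weight p r c (m - 1)"
      using assms by (intro mult_nonneg_nonneg death_nonneg scale_weight_nonneg) auto
    show "0 \<le> scale p r c m y" for y
      using assms by (intro scale_nonneg) auto
    show "1 \<le> scale p r c m y" if "y \<in> {..<c} \<inter> {1..r}" for y
      using that assms by (intro scale_ge_1) auto
    show "measure_pmf.expectation (bd_step p r y) (scale p r c m)
        \<le> scale p r c m y + death p r m * scale_weight p r c (m - 1)" if "y \<in> {1..r} - {..<c}" for y
      using that assms by (intro expectation_scale_le) auto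
  qed (use assms in auto)
  also have "\<dots> \<le> real T * scale_weight p r c (m - 1)"
  proof -
    have "death p r m \<le> 1"
      using birth_plus_death_le_1[of m r p] birth_nonneg[of m r p] assms by simp
    then show ?thesis
      using assms by (simp add: scale_eq_0 mult_left_le_one_le scale_weight_nonneg death_nonneg
          mult_left_mono)
  qed
  also have "scale_weight p r c (m - 1) = (\<Prod>z\<in>{c..<m}. death p r z / birth p r z)"
  proof -
    have "{c..m - 1} = {c..<m}"
      using assms by auto
    then show ?thesis
      by (simp add: scale_weight_def)
  qed
  finally show ?thesis .
qed

definition J_integrand :: "nat \<Rightarrow> real \<Rightarrow> real" where
  "J_integrand p u = ln ((real p - 1) * (1 - u) / u)"

definition J_primitive :: "nat \<Rightarrow> real \<Rightarrow> real" where
  "J_primitive p u = u * ln (real p - 1) - u * ln u - (1 - u) * ln (1 - u)"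

lemma J_integrand_eq:
  "2 \<le> p \<Longrightarrow> 0 < u \<Longrightarrow> u < 1 \<Longrightarrow> J_integrand p u = ln (real p - 1) + ln (1 - u) - ln u"
  unfolding J_integrand_def by (simp add: ln_div ln_mult)

lemma has_real_derivative_J_primitive:
  assumes "2 \<le> p" "0 < u" "u < 1"
  shows "(J_primitive p has_real_derivative J_integrand p u) (at u)"
proof -
  have "(J_primitive p has_real_derivative
      ln (real p - 1) - (1 * ln u + u * (1 / u)) - ((-1) * ln (1 - u) + (1 - u) * (-1 / (1 - u)))) (at u)"
    unfolding J_primitive_def using assms by (auto intro!: derivative_eq_intros)
  then show ?thesis
    using assms by (simp add: J_integrand_eq field_simps)
qed

lemma J_eq_J_primitive_diff:
  assumes "2 \<le> p" "0 < a" "a \<le> b" "b < 1"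
  shows "J p a b = J_primitive p b - J_primitive p a"
proof -
  have "(J_integrand p has_integral (J_primitive p b - J_primitive p a)) {a..b}"
  proof (rule fundamental_theorem_of_calculus[OF \<open>a \<le> b\<close>])
    fix x
    assume "x \<in> {a..b}"
    then show "(J_primitive p has_vector_derivative J_integrand p x) (at x within {a..b})"
      using assms has_real_derivative_J_primitive[of p x]
      by (auto simp: has_real_derivative_iff_has_vector_derivative[symmetric]
          intro: has_field_derivative_at_within)
  qed
  then show ?thesis
    unfolding J_def J_integrand_def[abs_def] by (rule integral_unique)
qed

lemma J_integrand_antimono:
  assumes "2 \<le> p" "0 < u" "u \<le> v" "v < 1"
  shows "J_integrand p v \<le> J_integrand p u"
proof -
  have "ln (1 - v) \<le> ln (1 - u)" "ln u \<le> ln v"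
    using assms by simp_all
  then show ?thesis
    using assms by (simp add: J_integrand_eq del: ln_le_cancel_iff)
qed

lemma J_primitive_diff_le:
  assumes "2 \<le> p" "0 < y" "y < x" "x < 1"
  shows "J_primitive p x - J_primitive p y \<le> (x - y) * J_integrand p y"
proof -
  obtain z where z: "y < z" "z < x" "J_primitive p x - J_primitive p y = (x - y) * J_integrand p z"
    using MVT2[OF \<open>y < x\<close>, of "J_primitive p" "J_integrand p"] has_real_derivative_J_primitive[OF \<open>2 \<le> p\<close>]
      assms by force
  moreover have "J_integrand p z \<le> J_integrand p y"
    using J_integrand_antimono[OF \<open>2 \<le> p\<close> \<open>0 < y\<close>] z assms by auto
  ultimately show ?thesis
    using assms by (simp add: mult_left_mono)
qed

lemma birth_div_death:
  assumes "0 < p" "2 \<le> z" "z \<le> r"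
  shows "birth p r z / death p r z = (real p - 1) * (real r - real z) / (real z - 1)"
proof -
  define K where "K = real p * (real r * (real r - 1))"
  have "K \<noteq> 0" "real z \<noteq> 0" "real z - 1 \<noteq> 0"
    using assms by (auto simp: K_def)
  have "birth p r z = (real p - 1) * (real z * (real r - real z)) / K"
    "death p r z = real z * (real z - 1) / K"
    unfolding birth_def death_def K_def by simp_all
  with \<open>K \<noteq> 0\<close> have "birth p r z / death p r z
      = (real p - 1) * (real z * (real r - real z)) / (real z * (real z - 1))"
    by simp
  also have "\<dots> = (real p - 1) * (real r - real z) / (real z - 1)"
    using \<open>real z \<noteq> 0\<close> \<open>real z - 1 \<noteq> 0\<close> by (simp add: field_simps)
  finally show ?thesis .
qed

lemma J_primitive_increment_le_ln_birth_div_death: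
  assumes "2 \<le> p" "2 \<le> z" "z + 1 < r"
  shows "real r * (J_primitive p ((real z + 1) / real r) - J_primitive p (real z / real r))
    \<le> ln (birth p r z / death p r z)"
proof -
  have r: "0 < real r" "real z + 1 < real r"
    using assms by auto
  have "real r * (J_primitive p ((real z + 1) / real r) - J_primitive p (real z / real r))
      \<le> real r * (((real z + 1) / real r - real z / real r) * J_integrand p (real z / real r))"
    using r assms
    by (intro mult_left_mono J_primitive_diff_le) (auto simp: field_simps)
  also have "\<dots> = J_integrand p (real z / real r)"
    using r by (simp add: field_simps)
  also have "\<dots> = ln ((real p - 1) * (real r - real z) / real z)"
  proof -
    have "(real p - 1) * (1 - real z / real r) / (real z / real r) = (real p - 1) * (real r - real z) / real z"
      using r assms by (simp add: field_simps)
    then show ?thesis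
      unfolding J_integrand_def by (simp only:)
  qed
  also have "\<dots> \<le> ln ((real p - 1) * (real r - real z) / (real z - 1))"
    using r assms by (subst ln_le_cancel_iff) (auto intro!: divide_left_mono mult_pos_pos)
  also have "\<dots> = ln (birth p r z / death p r z)"
    using assms by (simp add: birth_div_death)
  finally show ?thesis .
qed

lemma prod_death_div_birth_le_exp:
  assumes "2 \<le> p" "2 \<le> c" "c \<le> m" "m < r"
  shows "(\<Prod>z\<in>{c..<m}. death p r z / birth p r z)
    \<le> exp (- real r * (J_primitive p (real m / real r) - J_primitive p (real c / real r)))"
proof -
  have "real r * (J_primitive p (real m / real r) - J_primitive p (real c / real r)) =
      (\<Sum>z = c..<m. real r * (J_primitive p (real (Suc z) / real r) - J_primitive p (real z / real r)))"
    using sum_Suc_diff'[OF \<open>c \<le> m\<close>, where f="\<lambda>z. J_primitive p (real z / real r)"]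
    by (simp add: sum_distrib_left[symmetric] del: of_nat_Suc)
  also have "\<dots> \<le> (\<Sum>z = c..<m. ln (birth p r z / death p r z))"
    using assms J_primitive_increment_le_ln_birth_div_death[of p _ r]
    by (intro sum_mono) (simp add: add.commute)
  finally have "exp (- (\<Sum>z = c..<m. ln (birth p r z / death p r z)))
      \<le> exp (- real r * (J_primitive p (real m / real r) - J_primitive p (real c / real r)))"
    by simp
  moreover have "exp (- ln (birth p r z / death p r z)) = death p r z / birth p r z"
    if "z \<in> {c..<m}" for z
    using that assms birth_pos[of p z r] death_pos[of p z r] by (simp add: ln_div exp_diff)
  ultimately show ?thesis
    by (simp add: exp_sum sum_negf[symmetric])
qed

lemma hit_prob_le_exp:
  assumes "2 \<le> p" "2 \<le> c" "c \<le> m" "m < r" "x \<in> {m..r}"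
  shows "hit_prob p r {..<c} T x
    \<le> real T * exp (- real r * (J_primitive p (real m / real r) - J_primitive p (real c / real r)))"
proof -
  have "hit_prob p r {..<c} T x \<le> real T * (\<Prod>z\<in>{c..<m}. death p r z / birth p r z)"
    using assms by (intro hit_prob_le_prod) auto
  also have "\<dots> \<le> real T
      * exp (- real r * (J_primitive p (real m / real r) - J_primitive p (real c / real r)))"
    using assms by (intro mult_left_mono prod_death_div_birth_le_exp) auto
  finally show ?thesis .
qed

lemma prob_below_eq_hit_prob:
  "measure_pmf.prob (bd_traj p r T x) {xs. \<exists>y \<in> set xs. real y < a} = hit_prob p r {..<nat \<lceil>a\<rceil>} T x"
proof -
  have "real y < a \<longleftrightarrow> y \<in> {..<nat \<lceil>a\<rceil>}" for y
    by (metis lessThan_iff nat_ceiling_le_eq not_le)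
  then show ?thesis
    unfolding hit_prob_def by simp
qed

lemma prob_below_le_steps:
  assumes "a \<le> real x"
  shows "measure_pmf.prob (bd_traj p r T x) {xs. \<exists>y \<in> set xs. real y < a} \<le> real T"
proof -
  have "x \<notin> {..<nat \<lceil>a\<rceil>}"
    using assms by (metis lessThan_iff nat_ceiling_le_eq not_le)
  then show ?thesis
    by (simp add: prob_below_eq_hit_prob hit_prob_le_steps)
qed

lemma prob_below_le_exp:
  assumes "2 \<le> p" "a \<le> b" "2 \<le> nat \<lceil>a * real r\<rceil>" "nat \<lceil>b * real r\<rceil> < r"
    and "b * real r \<le> real x" "x \<le> r"
  shows "measure_pmf.prob (bd_traj p r T x) {xs. \<exists>y \<in> set xs. real y < a * real r}
    \<le> real T * exp (- real r * (J_primitive p (real (nat \<lceil>b * real r\<rceil>) / real r)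
      - J_primitive p (real (nat \<lceil>a * real r\<rceil>) / real r)))"
proof -
  have "nat \<lceil>a * real r\<rceil> \<le> nat \<lceil>b * real r\<rceil>"
    using assms by (intro nat_mono ceiling_mono mult_right_mono) auto
  moreover have "nat \<lceil>b * real r\<rceil> \<le> x"
    using assms by simp
  ultimately show ?thesis
    unfolding prob_below_eq_hit_prob using assms by (intro hit_prob_le_exp) auto
qed

lemma eventually_le_nat_ceiling:
  assumes "0 < a"
  shows "\<forall>\<^sub>F r in sequentially. k \<le> nat \<lceil>a * real r\<rceil>"
proof -
  have "\<forall>\<^sub>F r in sequentially. real k / a < real r"
    using filterlim_real_sequentially by (simp add: filterlim_at_top_dense)
  then show ?thesis
  proof eventually_elim
    case (elim r)
    then have "real k \<le> a * real r"
      using assms by (simp add: field_simps)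
    then have "real k \<le> real (nat \<lceil>a * real r\<rceil>)"
      using real_nat_ceiling_ge by (rule order_trans)
    then show ?case
      by (simp only: of_nat_le_iff)
  qed
qed

lemma eventually_nat_ceiling_less:
  assumes "b < 1"
  shows "\<forall>\<^sub>F r in sequentially. nat \<lceil>b * real r\<rceil> < r"
proof -
  have "\<forall>\<^sub>F r in sequentially. 1 / (1 - b) < real r"
    using filterlim_real_sequentially by (simp add: filterlim_at_top_dense)
  then show ?thesis
  proof eventually_elim
    case (elim r)
    have "0 < 1 / (1 - b)"
      using assms by simp
    with elim have "0 < real r"
      by linarith
    then have "0 < r"
      by simp
    with elim have "b * real r \<le> real (r - 1)"
      using assms by (simp add: field_simps of_nat_diff)
    then have "nat \<lceil>b * real r\<rceil> \<le> r - 1"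
      by simp
    with \<open>0 < r\<close> show ?case
      by linarith
  qed
qed

lemma tendsto_nat_ceiling_mult_div:
  assumes "0 \<le> a"
  shows "(\<lambda>r. real (nat \<lceil>a * real r\<rceil>) / real r) \<longlonglongrightarrow> a"
proof (rule tendsto_sandwich[where f="\<lambda>_. a" and h="\<lambda>r. a + 1 / real r"])
  show "\<forall>\<^sub>F r in sequentially. a \<le> real (nat \<lceil>a * real r\<rceil>) / real r"
    using eventually_gt_at_top[of "0::nat"]
    by eventually_elim (use real_nat_ceiling_ge in \<open>simp add: field_simps\<close>)
  show "\<forall>\<^sub>F r in sequentially. real (nat \<lceil>a * real r\<rceil>) / real r \<le> a + 1 / real r"
    using eventually_gt_at_top[of "0::nat"]
  proof eventually_elim
    case (elim r)
    have "real (nat \<lceil>a * real r\<rceil>) \<le> a * real r + 1"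
      using assms of_int_ceiling_diff_one_le[of "a * real r"] by simp
    then show ?case
      using elim by (simp add: field_simps)
  qed
  show "(\<lambda>r. a + 1 / real r) \<longlonglongrightarrow> a"
    using tendsto_add[OF tendsto_const[of a] lim_1_over_n] by simp
qed simp

lemma tendsto_J_primitive_nat_ceiling_diff:
  assumes "2 \<le> p" "0 < a" "a \<le> b" "b < 1"
  shows "(\<lambda>r. J_primitive p (real (nat \<lceil>b * real r\<rceil>) / real r)
      - J_primitive p (real (nat \<lceil>a * real r\<rceil>) / real r)) \<longlonglongrightarrow> J p a b"
proof -
  have cont: "isCont (J_primitive p) u" if "0 < u" "u < 1" for u
    using has_real_derivative_J_primitive[OF assms(1) that] by (rule DERIV_isCont)
  have "(\<lambda>r. J_primitive p (real (nat \<lceil>u * real r\<rceil>) / real r)) \<longlonglongrightarrow> J_primitive p u"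
    if "0 < u" "u < 1" for u
    using that by (intro isCont_tendsto_compose[OF cont tendsto_nat_ceiling_mult_div]) auto
  from tendsto_diff[OF this this] assms show ?thesis
    by (simp add: J_eq_J_primitive_diff)
qed

theorem lemma4p8:
  fixes p :: nat and \<alpha>0 \<alpha>1 :: real
  assumes "prime p" and "odd p"
    and "0 < \<alpha>0" and "\<alpha>0 < \<alpha>1" and "\<alpha>1 < (real p - 1) / real p"
  shows "\<exists>\<delta> :: nat \<Rightarrow> real. (\<delta> \<longlonglongrightarrow> 0) \<and>
    (\<forall>r T. r \<ge> 2 \<longrightarrow> T \<le> r ^ 3 \<longrightarrow>
       (\<forall>s \<in> {1..r}. real s \<ge> \<alpha>1 * real r \<longrightarrow>
          measure_pmf.prob (bd_traj p r T s) {xs. \<exists>x \<in> set xs. real x < \<alpha>0 * real r}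
            \<le> real T * exp (- (J p \<alpha>0 \<alpha>1 + \<delta> r) * real r)))"
proof -
  have "2 \<le> p"
    using \<open>prime p\<close> prime_ge_2_nat by blast
  then have "(real p - 1) / real p < 1"
    by simp
  with assms(5) have "\<alpha>1 < 1"
    by linarith
  define c where "c r = nat \<lceil>\<alpha>0 * real r\<rceil>" for r :: nat
  define m where "m r = nat \<lceil>\<alpha>1 * real r\<rceil>" for r :: nat
  define \<Delta> where "\<Delta> r = J_primitive p (real (m r) / real r) - J_primitive p (real (c r) / real r)" for r
  define good where "good r \<longleftrightarrow> 2 \<le> c r \<and> m r < r" for r
  \<comment> \<open>For the finitely many r that are not good, \<delta> r = -J reduces the claim to the trivial bound T.\<close>
  define \<delta> where "\<delta> r = (if good r then \<Delta> r - J p \<alpha>0 \<alpha>1 else - J p \<alpha>0 \<alpha>1)" for r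
  have "(\<lambda>r. \<Delta> r - J p \<alpha>0 \<alpha>1) \<longlonglongrightarrow> 0"
    unfolding \<Delta>_def c_def m_def using assms \<open>2 \<le> p\<close> \<open>\<alpha>1 < 1\<close>
    by (intro LIM_zero tendsto_J_primitive_nat_ceiling_diff) auto
  moreover have "\<forall>\<^sub>F r in sequentially. good r"
    unfolding good_def c_def m_def
    using eventually_le_nat_ceiling[OF \<open>0 < \<alpha>0\<close>] eventually_nat_ceiling_less[OF \<open>\<alpha>1 < 1\<close>]
    by (rule eventually_conj)
  then have "\<forall>\<^sub>F r in sequentially. \<Delta> r - J p \<alpha>0 \<alpha>1 = \<delta> r"
    by eventually_elim (simp add: \<delta>_def)
  ultimately have "\<delta> \<longlonglongrightarrow> 0"
    by (rule Lim_transform_eventually)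
  moreover have "measure_pmf.prob (bd_traj p r T s) {xs. \<exists>x \<in> set xs. real x < \<alpha>0 * real r}
      \<le> real T * exp (- (J p \<alpha>0 \<alpha>1 + \<delta> r) * real r)"
    if "s \<in> {1..r}" "\<alpha>1 * real r \<le> real s" for r T s
  proof (cases "good r")
    case True
    then have "- (J p \<alpha>0 \<alpha>1 + \<delta> r) * real r = - real r * \<Delta> r"
      by (simp add: \<delta>_def)
    with True that show ?thesis
      using prob_below_le_exp[OF \<open>2 \<le> p\<close> less_imp_le[OF \<open>\<alpha>0 < \<alpha>1\<close>], of r s T]
      unfolding good_def \<Delta>_def c_def m_def by simp
  next
    case False
    have "\<alpha>0 * real r \<le> real s"
      using assms that mult_right_mono[of \<alpha>0 \<alpha>1 "real r"] by linarith
    with False show ?thesis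
      by (simp add: prob_below_le_steps \<delta>_def)
  qed
  ultimately show ?thesis
    by blast
qed

end
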